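(* Let $\mu\in(0,1)$, $n>0$ and $k<0$ be real constants with $\frac{2k}{n^2}+\mu>0$, let $a_1=\frac{2k}{n^2}+\mu-1$, $b_1=\left(-\frac{\mu}{2k}\right)^{1/3}$, and assume $b_1^2>a_1^2$. Consider the system $$\ddot x-2n\dot y=\Omega_x,\qquad \ddot y+2n\dot x=\Omega_y,\qquad \ddot z=\Omega_z,$$ where $\Omega(x,y,z)=\frac{n^2}{2}(x^2+y^2)-k r_1^2+\frac{\mu}{r_2}$, $r_1^2=(x+\mu)^2+y^2+z^2$, $r_2^2=(x+\mu-1)^2+y^2+z^2$. Then each of the triangular equilibrium points $\left(\frac{2k}{n^2},0,\pm(b_1^2-a_1^2)^{1/2}\right)$ is linearly unstable: the characteristic equation of the variational (linearized) equations about the point, $$\lambda^6+2(n^2+3k)\lambda^4+n^2\left[n^2-6k\,\frac{3a_1^2-b_1^2}{b_1^2}\right]\lambda^2+6n^4k\,\frac{b_1^2-a_1^2}{b_1^2}=0,$$ has a positive real root $\lambda$.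
   Context: This is Robe's restricted three-body problem with the more massive primary an oblate spheroid ($n^2=1+\frac32 A_1$, $A_1$ the oblateness coefficient; $\mu=m_2/(m_1+m_2)$; $k$ a density-dependent constant). The variational equations about an equilibrium $(x_0,y_0,z_0)$ are obtained by substituting $(x_0+\xi,y_0+\eta,z_0+\zeta)$ and keeping linear terms: $\ddot\xi-2n\dot\eta=\Omega^0_{xx}\xi+\Omega^0_{xy}\eta+\Omega^0_{xz}\zeta$, $\ddot\eta+2n\dot\xi=\Omega^0_{yx}\xi+\Omega^0_{yy}\eta+\Omega^0_{yz}\zeta$, $\ddot\zeta=\Omega^0_{zx}\xi+\Omega^0_{zy}\eta+\Omega^0_{zz}\zeta$, where superscript $0$ denotes evaluation at the equilibrium; the characteristic equation comes from seeking solutions proportional to $e^{\lambda t}$. *)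

theory Defs
  imports "HOL-Analysis.Analysis"
begin

definition r1sq :: "real \<Rightarrow> real^3 \<Rightarrow> real" where
  "r1sq \<mu> p = (p$1 + \<mu>)^2 + (p$2)^2 + (p$3)^2"

definition r2 :: "real \<Rightarrow> real^3 \<Rightarrow> real" where
  "r2 \<mu> p = sqrt ((p$1 + \<mu> - 1)^2 + (p$2)^2 + (p$3)^2)"

definition Omega :: "real \<Rightarrow> real \<Rightarrow> real \<Rightarrow> real^3 \<Rightarrow> real" where
  "Omega \<mu> n k p = n^2 / 2 * ((p$1)^2 + (p$2)^2) - k * r1sq \<mu> p + \<mu> / r2 \<mu> p"

definition partial2 :: "(real^3 \<Rightarrow> real) \<Rightarrow> 3 \<Rightarrow> 3 \<Rightarrow> real^3 \<Rightarrow> real" where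
  "partial2 f i j p =
     deriv (\<lambda>s. deriv (\<lambda>t. f (p + s *\<^sub>R axis j 1 + t *\<^sub>R axis i 1)) 0) 0"

text \<open>Characteristic matrix of the variational equations
  xi'' - 2 n eta' = Oxx xi + Oxy eta + Oxz zeta, eta'' + 2 n xi' = ..., zeta'' = ...,
  obtained by substituting solutions proportional to exp(lambda t).\<close>
definition char_matrix :: "real \<Rightarrow> real \<Rightarrow> real \<Rightarrow> real^3 \<Rightarrow> real \<Rightarrow> real^3^3" where
  "char_matrix \<mu> n k p lam =
     (let H = (\<lambda>i j. partial2 (Omega \<mu> n k) i j p) in
      vector [vector [lam^2 - H 1 1, - 2 * n * lam - H 1 2, - H 1 3],
              vector [2 * n * lam - H 2 1, lam^2 - H 2 2, - H 2 3],
              vector [- H 3 1, - H 3 2, lam^2 - H 3 3]])"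

definition char_poly :: "real \<Rightarrow> real \<Rightarrow> real \<Rightarrow> real^3 \<Rightarrow> real \<Rightarrow> real" where
  "char_poly \<mu> n k p lam = det (char_matrix \<mu> n k p lam)"

end

theory Submission
  imports Defs "HOL-Real_Asymp.Real_Asymp"
begin

text \<open>At a triangular point the distance to the second primary is \<open>r\<^sub>2 = b\<^sub>1\<close>, and
  \<open>b\<^sub>1\<^sup>3 = -\<mu>/(2k)\<close> makes the isotropic part \<open>-(2k + \<mu>/r\<^sub>2\<^sup>3) I\<close> of the Hessian of \<open>\<Omega>\<close>
  vanish. What is left is \<open>n\<^sup>2 diag(1,1,0) - (6k/b\<^sub>1\<^sup>2) q q\<^sup>T\<close> with \<open>q = (a\<^sub>1, 0, z\<^sub>0)\<close>,
  and the characteristic determinant is an even sextic in \<open>\<lambda>\<close> whose constant term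
  \<open>6 n\<^sup>4 k z\<^sub>0\<^sup>2 / b\<^sub>1\<^sup>2\<close> is negative. Since the sextic tends to infinity, it has a
  positive root by the intermediate value theorem.\<close>

lemma r2_along_line:
  "r2 \<mu> (q + t *\<^sub>R v) = sqrt ((q$1 + t * v$1 + \<mu> - 1)^2 + (q$2 + t * v$2)^2 + (q$3 + t * v$3)^2)"
  by (simp add: r2_def algebra_simps)

lemma Omega_along_line:
  "Omega \<mu> n k (q + t *\<^sub>R v) =
     n^2/2 * ((q$1 + t * v$1)^2 + (q$2 + t * v$2)^2)
     - k * ((q$1 + t * v$1 + \<mu>)^2 + (q$2 + t * v$2)^2 + (q$3 + t * v$3)^2)
     + \<mu> / r2 \<mu> (q + t *\<^sub>R v)"
  by (simp add: Omega_def r1sq_def r2_def algebra_simps)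

lemma Omega_directional_derivative:
  fixes q v :: "real^3"
  assumes "r2 \<mu> q > 0"
  shows "deriv (\<lambda>t. Omega \<mu> n k (q + t *\<^sub>R v)) 0 =
     n^2 * (q$1 * v$1 + q$2 * v$2) - 2*k * ((q$1 + \<mu>) * v$1 + q$2 * v$2 + q$3 * v$3)
     - \<mu> * ((q$1 + \<mu> - 1) * v$1 + q$2 * v$2 + q$3 * v$3) / r2 \<mu> q ^ 3" (is "_ = ?D")
proof -
  define W where "W = (q$1 + \<mu> - 1)^2 + (q$2)^2 + (q$3)^2"
  have "W > 0" using assms by (simp add: r2_def W_def)
  have "((\<lambda>t. Omega \<mu> n k (q + t *\<^sub>R v)) has_real_derivative ?D) (at 0)"
    unfolding Omega_along_line r2_along_line
    apply (rule DERIV_cong)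
     apply (rule derivative_eq_intros refl | (use \<open>W > 0\<close> in \<open>simp add: W_def\<close>; fail))+
    using \<open>W > 0\<close> apply (simp add: r2_def flip: W_def)
    apply (simp add: field_simps power3_eq_cube)
    done
  then show ?thesis by (rule DERIV_imp_deriv)
qed

lemma Omega_second_directional_derivative:
  fixes p u v :: "real^3"
  assumes "r2 \<mu> p > 0"
  shows "deriv (\<lambda>s. deriv (\<lambda>t. Omega \<mu> n k (p + s *\<^sub>R u + t *\<^sub>R v)) 0) 0 =
     n^2 * (u$1 * v$1 + u$2 * v$2) - (2*k + \<mu> / r2 \<mu> p ^ 3) * (u$1 * v$1 + u$2 * v$2 + u$3 * v$3)
     + 3*\<mu> * ((p$1 + \<mu> - 1) * u$1 + p$2 * u$2 + p$3 * u$3)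
            * ((p$1 + \<mu> - 1) * v$1 + p$2 * v$2 + p$3 * v$3) / r2 \<mu> p ^ 5" (is "_ = ?D")
proof -
  define W where "W = (p$1 + \<mu> - 1)^2 + (p$2)^2 + (p$3)^2"
  have "W > 0" using assms by (simp add: r2_def W_def)
  define G where "G s = n^2 * ((p$1 + s * u$1) * v$1 + (p$2 + s * u$2) * v$2)
      - 2*k * ((p$1 + s * u$1 + \<mu>) * v$1 + (p$2 + s * u$2) * v$2 + (p$3 + s * u$3) * v$3)
      - \<mu> * ((p$1 + s * u$1 + \<mu> - 1) * v$1 + (p$2 + s * u$2) * v$2 + (p$3 + s * u$3) * v$3)
          / r2 \<mu> (p + s *\<^sub>R u) ^ 3" for s
  have "isCont (\<lambda>s. r2 \<mu> (p + s *\<^sub>R u)) 0"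
    unfolding r2_along_line by (intro continuous_intros)
  then have "((\<lambda>s. r2 \<mu> (p + s *\<^sub>R u)) \<longlongrightarrow> r2 \<mu> p) (nhds 0)"
    using tendsto_at_iff_tendsto_nhds[of "\<lambda>s. r2 \<mu> (p + s *\<^sub>R u)" 0] by (simp add: isCont_def)
  then have "\<forall>\<^sub>F s in nhds 0. r2 \<mu> (p + s *\<^sub>R u) > 0"
    using assms by (rule order_tendstoD(1))
  then have inner: "\<forall>\<^sub>F s in nhds 0. deriv (\<lambda>t. Omega \<mu> n k (p + s *\<^sub>R u + t *\<^sub>R v)) 0 = G s"
    by eventually_elim (simp add: Omega_directional_derivative G_def)
  define r where "r = r2 \<mu> p"
  have "sqrt W = r"
    by (simp add: r_def r2_def W_def)
  have "(G has_real_derivative ?D) (at 0)"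
    unfolding G_def r2_along_line
    apply (rule DERIV_cong)
     apply (rule derivative_eq_intros refl | (use \<open>W > 0\<close> in \<open>simp add: W_def\<close>; fail))+
    apply (simp flip: W_def r_def add: \<open>sqrt W = r\<close>)
    using assms apply (simp add: r_def field_simps inverse_eq_divide eval_nat_numeral)
    done
  then have "((\<lambda>s. deriv (\<lambda>t. Omega \<mu> n k (p + s *\<^sub>R u + t *\<^sub>R v)) 0) has_real_derivative ?D) (at 0)"
    using DERIV_cong_ev[OF refl inner refl] by blast
  then show ?thesis by (rule DERIV_imp_deriv)
qed

lemma partial2_Omega_equilibrium:
  fixes p :: "real^3"
  assumes "b > 0" "r2 \<mu> p = b" "\<mu> = -2*k*b^3"
  defines "d \<equiv> p + (\<mu> - 1) *\<^sub>R axis 1 1"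
  shows "partial2 (Omega \<mu> n k) i j p = (if i = j \<and> i \<noteq> 3 then n^2 else 0) - 6*k / b^2 * d$i * d$j"
proof -
  have "(axis j 1 :: real^3)$1 * (axis i 1 :: real^3)$1 + (axis j 1 :: real^3)$2 * (axis i 1 :: real^3)$2
      = (if i = j \<and> i \<noteq> 3 then 1 else 0)"
    "(axis j 1 :: real^3)$1 * (axis i 1 :: real^3)$1 + (axis j 1 :: real^3)$2 * (axis i 1 :: real^3)$2
      + (axis j 1 :: real^3)$3 * (axis i 1 :: real^3)$3 = (if i = j then 1 else 0)"
    "(p$1 + \<mu> - 1) * (axis i 1 :: real^3)$1 + p$2 * (axis i 1 :: real^3)$2 + p$3 * (axis i 1 :: real^3)$3 = d$i"
    "(p$1 + \<mu> - 1) * (axis j 1 :: real^3)$1 + p$2 * (axis j 1 :: real^3)$2 + p$3 * (axis j 1 :: real^3)$3 = d$j"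
    using exhaust_3[of i] exhaust_3[of j] by (auto simp: axis_def d_def)
  moreover have "\<mu> / b^3 = -2*k" "3*\<mu>*X*Y / b^5 = -(6*k*X*Y / b^2)" for X Y
    using assms(1,3) by (simp_all add: field_simps eval_nat_numeral)
  ultimately show ?thesis
    unfolding partial2_def using assms(1,2)
    by (simp add: Omega_second_directional_derivative)
qed

lemma char_poly_equilibrium:
  fixes p :: "real^3"
  assumes "b > 0" "r2 \<mu> p = b" "\<mu> = -2*k*b^3" "p$2 = 0"
  shows "char_poly \<mu> n k p l =
     l^6 + 2*(n^2 + 3*k) * l^4 + n^2 * (n^2 + 12*k - 18*k * (p$1 + \<mu> - 1)^2 / b^2) * l^2
     + 6 * n^4 * k * (p$3)^2 / b^2"
proof -
  have "(p$1 + \<mu> - 1)^2 + (p$3)^2 = (r2 \<mu> p)^2"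
    using assms(4) by (simp add: r2_def)
  then have "(p$1 + \<mu> - 1)^2 + (p$3)^2 = b^2"
    using assms(2) by simp
  then show ?thesis
    unfolding char_poly_def char_matrix_def Let_def det_3 partial2_Omega_equilibrium[OF assms(1-3)]
    using \<open>b > 0\<close> apply (simp add: axis_def assms(4) field_simps)
    apply algebra
    done
qed

lemma even_sextic_has_positive_root:
  fixes c2 c1 c0 :: real
  assumes "c0 < 0"
  shows "\<exists>l>0. l^6 + c2 * l^4 + c1 * l^2 + c0 = 0"
proof -
  define f where "f l = l^6 + c2 * l^4 + c1 * l^2 + c0" for l :: real
  have "filterlim f at_top at_top"
    unfolding f_def by real_asymp
  then have "\<forall>\<^sub>F x in at_top. x > 0 \<and> f x \<ge> 0"
    by (intro eventually_conj eventually_gt_at_top) (simp add: filterlim_at_top)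
  then obtain M where "M > 0" "f M \<ge> 0"
    unfolding eventually_at_top_linorder by (meson order_refl)
  moreover have "continuous_on {0..M} f"
    unfolding f_def by (intro continuous_intros)
  ultimately obtain l where "0 \<le> l" "f l = 0"
    using IVT'[of f 0 0 M] assms by (auto simp: f_def)
  moreover have "l \<noteq> 0"
    using \<open>f l = 0\<close> assms by (auto simp: f_def)
  ultimately show ?thesis
    by (auto simp: f_def intro!: exI[of _ l])
qed

theorem mainTheorem2:
  fixes \<mu> n k a1 b1 z0 :: real
  assumes "0 < \<mu>" "\<mu> < 1" "n > 0" "k < 0"
    and "2 * k / n^2 + \<mu> > 0"
    and a1: "a1 = 2 * k / n^2 + \<mu> - 1"
    and b1: "b1 = root 3 (- \<mu> / (2 * k))"
    and "b1^2 > a1^2"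
    and z0: "z0 = sqrt (b1^2 - a1^2) \<or> z0 = - sqrt (b1^2 - a1^2)"
  shows "(\<exists>l::real. l > 0 \<and>
            l^6 + 2 * (n^2 + 3 * k) * l^4
            + n^2 * (n^2 - 6 * k * (3 * a1^2 - b1^2) / b1^2) * l^2
            + 6 * n^4 * k * (b1^2 - a1^2) / b1^2 = 0)
       \<and> (\<exists>l::real. l > 0 \<and> char_poly \<mu> n k (vector [2 * k / n^2, 0, z0]) l = 0)"
proof -
  define P where "P = (vector [2 * k / n^2, 0, z0] :: real^3)"
  have "- \<mu> / (2 * k) > 0"
    using \<open>0 < \<mu>\<close> \<open>k < 0\<close> by (simp add: field_simps)
  then have "b1 > 0" "b1^3 = - \<mu> / (2 * k)"
    using b1 by (simp_all add: real_root_gt_zero)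
  then have \<mu>: "\<mu> = -2*k*b1^3"
    using \<open>k < 0\<close> by (simp add: field_simps)
  have z0_sq: "z0^2 = b1^2 - a1^2"
    using z0 \<open>b1^2 > a1^2\<close> by auto
  then have "r2 \<mu> P = b1"
    using a1 \<open>b1 > 0\<close> by (simp add: P_def r2_def)
  then have "char_poly \<mu> n k P l = l^6 + 2 * (n^2 + 3 * k) * l^4
      + n^2 * (n^2 + 12 * k - 18 * k * a1^2 / b1^2) * l^2 + 6 * n^4 * k * (b1^2 - a1^2) / b1^2" for l
    using char_poly_equilibrium[OF \<open>b1 > 0\<close> _ \<mu>] a1 z0_sq by (simp add: P_def)
  \<comment> \<open>The \<open>\<lambda>\<^sup>2\<close> coefficient of the determinant differs from the one in the paper's sextic;
    only the common negative constant term matters for the positive root.\<close>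
  moreover have "6 * n^4 * k * (b1^2 - a1^2) / b1^2 < 0"
    using \<open>n > 0\<close> \<open>k < 0\<close> \<open>b1^2 > a1^2\<close> \<open>b1 > 0\<close> by (intro divide_neg_pos mult_neg_pos mult_pos_neg) auto
  ultimately show ?thesis
    unfolding P_def[symmetric] by (metis even_sextic_has_positive_root)
qed

end
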